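(* Let $T>0$ and let $(d(t),\,t\in[0,T])$ be a nonnegative, integrable, weakly increasing demand function. Suppose all stores are full at time $0$, i.e. $E_i(0)=\overline E_i$ for all $i\in\mathcal S$, and that some cross-charging policy, with store levels $(E_i(t))$, completely serves $d$ on $[0,T]$. Then there is a policy without cross-charging (all $r_i(t)\ge0$), with store levels $(\hat E_i(t))$, that completely serves $d$ on $[0,T]$ and satisfies $\hat E_i(T)\ge E_i(T)$ for every $i\in\mathcal S$.
   Context: A finite set $\mathcal S$ of energy stores is given. Store $i\in\mathcal S$ has capacity $\overline E_i>0$, maximum discharge rate $P_i>0$, maximum charge rate $P'_i\ge0$ and round-trip efficiency $\eta_i\in(0,1]$. A cross-charging policy is a choice of measurable rate functions $(r_i(t),\,t\ge0)$ with $E_i(t)=E_i(0)-\int_0^t r_i(u)\,du$, subject to $0\le E_i(t)\le\overline E_i$, $-P'_i\le r_i(t)\le P_i$, and $$0\le\sum_{i:\,r_i(t)\ge0}r_i(t)+\sum_{i:\,r_i(t)<0}r_i(t)/\eta_i\le d(t)\quad\text{for all }t$$ (negative $r_i$ means store $i$ is charged, drawing energy at rate $-r_i/\eta_i$ from other stores; no external energy is available). It completely serves $d$ on an interval $I$ if the middle expression equals $d(t)$ for almost every $t\in I$. A policy with all $r_i(t)\ge0$ is one without cross-charging. *)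

theory Defs
  imports "HOL-Analysis.Analysis"
begin

definition level :: "('a \<Rightarrow> real) \<Rightarrow> ('a \<Rightarrow> real \<Rightarrow> real) \<Rightarrow> 'a \<Rightarrow> real \<Rightarrow> real" where
  "level E0 r i t = E0 i - (LINT u:{0..t}|lborel. r i u)"

text \<open>Total energy drawn from the stores at time t (charging store i at rate -r_i
  draws -r_i/eta_i from the others).\<close>
definition gross_draw :: "'a set \<Rightarrow> ('a \<Rightarrow> real) \<Rightarrow> ('a \<Rightarrow> real \<Rightarrow> real) \<Rightarrow> real \<Rightarrow> real" where
  "gross_draw S eta r t = (\<Sum>i\<in>S. if 0 \<le> r i t then r i t else r i t / eta i)"

definition is_policy ::
  "'a set \<Rightarrow> ('a \<Rightarrow> real) \<Rightarrow> ('a \<Rightarrow> real) \<Rightarrow> ('a \<Rightarrow> real) \<Rightarrow> ('a \<Rightarrow> real)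
   \<Rightarrow> (real \<Rightarrow> real) \<Rightarrow> real \<Rightarrow> ('a \<Rightarrow> real) \<Rightarrow> ('a \<Rightarrow> real \<Rightarrow> real) \<Rightarrow> bool" where
  "is_policy S Ebar P P' eta d T E0 r \<longleftrightarrow>
     (\<forall>i\<in>S. set_borel_measurable lborel {0..T} (r i)) \<and>
     (\<forall>i\<in>S. \<forall>t\<in>{0..T}. 0 \<le> level E0 r i t \<and> level E0 r i t \<le> Ebar i
                       \<and> - P' i \<le> r i t \<and> r i t \<le> P i) \<and>
     (\<forall>t\<in>{0..T}. 0 \<le> gross_draw S eta r t \<and> gross_draw S eta r t \<le> d t)"

definition completely_serves ::
  "'a set \<Rightarrow> ('a \<Rightarrow> real) \<Rightarrow> ('a \<Rightarrow> real \<Rightarrow> real) \<Rightarrow> (real \<Rightarrow> real) \<Rightarrow> real set \<Rightarrow> bool" where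
  "completely_serves S eta r d I \<longleftrightarrow> (AE t in lborel. t \<in> I \<longrightarrow> gross_draw S eta r t = d t)"

end

theory Submission
  imports Defs
begin

text \<open>
  Fix a set \<open>A\<close> of stores and let \<open>q\<close> be the total discharge power of the others. Since
  \<open>d\<close> is increasing, \<open>d > q\<close> exactly on a final interval \<open>(\<tau>, T]\<close>, where the stores in \<open>A\<close>
  must deliver at least \<open>d - q\<close>; and since every store starts full, what store \<open>i\<close> delivers
  on \<open>(\<tau>, T]\<close> is at most its net depletion \<open>c i\<close>, the integral of \<open>r i\<close> over \<open>[0, T]\<close>.
  Hence the integral of \<open>max 0 (d - q)\<close> over \<open>[0, T]\<close> is at most \<open>\<Sum>i\<in>A. c i\<close>.

  Conversely, these Hall-type inequalities suffice for a schedule without cross-charging in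
  which store \<open>i\<close> delivers at most \<open>c i\<close>: let one store \<open>k\<close> serve the band
  \<open>min (P k) (max 0 (d - a))\<close> of the demand, with the offset \<open>a \<ge> 0\<close> chosen by the
  intermediate value theorem so that the band carries energy \<open>c k\<close> (or \<open>a = 0\<close> and it carries
  less). The residual demand is again increasing and satisfies the inequalities for the
  remaining stores.
\<close>

lemma integrable_indicator_mult_bounded:
  fixes g :: "real \<Rightarrow> real"
  assumes "g \<in> borel_measurable borel" "\<And>t. \<bar>g t\<bar> \<le> B" "X \<in> sets lborel" "X \<subseteq> {a..b}"
  shows "integrable lborel (\<lambda>t. indicator X t * g t)"
proof (rule Bochner_Integration.integrable_bound)
  show "integrable lborel (\<lambda>t. B * indicator {a..b} t)"
    by (intro integrable_mult_right integrable_real_indicator) (auto simp: emeasure_lborel_Icc_eq)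
  show "(\<lambda>t. indicator X t * g t) \<in> borel_measurable lborel"
    using assms by simp
  have "0 \<le> B" using assms(2)[of 0] by linarith
  then show "AE t in lborel. norm (indicator X t * g t) \<le> norm (B * indicator {a..b} t)"
    using assms(2,4) by (intro AE_I2) (auto simp: indicator_def abs_mult)
qed

definition band :: "real \<Rightarrow> real \<Rightarrow> real \<Rightarrow> real" where
  "band Q a x = min Q (max 0 (x - a))"

lemma band_nonneg: "0 \<le> Q \<Longrightarrow> 0 \<le> band Q a x"
  unfolding band_def by simp

lemma band_le_height: "band Q a x \<le> Q"
  unfolding band_def by simp

lemma band_le: "0 \<le> a \<Longrightarrow> 0 \<le> x \<Longrightarrow> band Q a x \<le> x"
  unfolding band_def by simp

lemma band_lipschitz_offset: "\<bar>band Q a x - band Q b x\<bar> \<le> \<bar>a - b\<bar>"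
  unfolding band_def by (auto simp: min_def max_def)

lemma band_residual_mono: "x \<le> y \<Longrightarrow> x - band Q a x \<le> y - band Q a y"
  unfolding band_def by (auto simp: min_def max_def)

lemma band_eq_0: "0 \<le> Q \<Longrightarrow> x \<le> a \<Longrightarrow> band Q a x = 0"
  unfolding band_def by simp

lemma excess_after_band_below_offset:
  "0 \<le> Q \<Longrightarrow> a \<le> p \<Longrightarrow> max 0 (x - band Q a x - p) = max 0 (x - (p + Q))"
  unfolding band_def by (auto simp: min_def max_def)

lemma excess_after_band_above_offset:
  "0 \<le> Q \<Longrightarrow> p < a \<Longrightarrow> max 0 (x - band Q a x - p) = max 0 (x - p) - band Q a x"
  unfolding band_def by (auto simp: min_def max_def)

lemma borel_measurable_band [measurable]:
  assumes [measurable]: "f \<in> borel_measurable M"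
  shows "(\<lambda>t. band Q a (f t)) \<in> borel_measurable M"
  unfolding band_def by measurable

definition energy_feasible ::
  "'a set \<Rightarrow> ('a \<Rightarrow> real) \<Rightarrow> ('a \<Rightarrow> real) \<Rightarrow> real \<Rightarrow> (real \<Rightarrow> real) \<Rightarrow> bool" where
  "energy_feasible S P c T d \<longleftrightarrow>
     (\<forall>A\<subseteq>S. (\<integral>t. indicator {0..T} t * max 0 (d t - sum P (S - A)) \<partial>lborel) \<le> sum c A)"

lemma band_offset_exists:
  fixes d :: "real \<Rightarrow> real"
  assumes [measurable]: "d \<in> borel_measurable borel"
    and d_bounds: "\<And>t. 0 \<le> d t \<and> d t \<le> D" and "0 \<le> Q" "0 \<le> T" "0 \<le> c"
  obtains a where "0 \<le> a" "(\<integral>t. indicator {0..T} t * band Q a (d t) \<partial>lborel) \<le> c"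
    "a = 0 \<or> (\<integral>t. indicator {0..T} t * band Q a (d t) \<partial>lborel) = c"
proof -
  define u where "u a = (\<integral>t. indicator {0..T} t * band Q a (d t) \<partial>lborel)" for a
  have integrable: "integrable lborel (\<lambda>t. indicator {0..T} t * band Q a (d t))" for a
    by (rule integrable_indicator_mult_bounded[where B=Q])
      (use \<open>0 \<le> Q\<close> band_nonneg band_le_height in auto)
  have "T-lipschitz_on UNIV u"
  proof (rule lipschitz_onI)
    fix x y :: real
    have "dist (u x) (u y)
        = \<bar>\<integral>t. indicator {0..T} t * band Q x (d t) - indicator {0..T} t * band Q y (d t) \<partial>lborel\<bar>"
      unfolding u_def dist_real_def by (simp add: integrable)
    also have "\<dots> \<le> (\<integral>t. \<bar>x - y\<bar> * indicator {0..T} t \<partial>lborel)"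
    proof (rule integral_abs_bound_integral)
      show "integrable lborel (\<lambda>t. \<bar>x - y\<bar> * indicator {0..T} t)"
        by (intro integrable_mult_right integrable_real_indicator) (auto simp: emeasure_lborel_Icc_eq)
      show "\<bar>indicator {0..T} t * band Q x (d t) - indicator {0..T} t * band Q y (d t)\<bar>
          \<le> \<bar>x - y\<bar> * indicator {0..T} t" for t
        using band_lipschitz_offset[of Q x "d t" y] by (auto simp: indicator_def)
    qed (simp add: integrable)
    also have "\<dots> = T * dist x y"
      using \<open>0 \<le> T\<close> by (simp add: dist_real_def)
    finally show "dist (u x) (u y) \<le> T * dist x y" .
  qed (use \<open>0 \<le> T\<close> in auto)
  then have "continuous_on {0..D} u"
    using lipschitz_on_continuous_on continuous_on_subset by blast
  moreover have "u D = 0"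
    unfolding u_def using d_bounds band_eq_0[OF \<open>0 \<le> Q\<close>] by simp
  moreover have "0 \<le> D"
    using d_bounds order_trans by blast
  ultimately show ?thesis
  proof (cases "u 0 \<le> c")
    case False
    then obtain a where "0 \<le> a" "u a = c"
      using IVT2'[of u D c 0] \<open>u D = 0\<close> \<open>0 \<le> c\<close> \<open>0 \<le> D\<close> \<open>continuous_on {0..D} u\<close> by auto
    then show ?thesis using that[of a] unfolding u_def by simp
  qed (use that[of 0] u_def in simp)
qed

lemma energy_feasible_residual:
  fixes d :: "real \<Rightarrow> real"
  assumes feasible: "energy_feasible (insert k F) P c T d" and "finite F" "k \<notin> F"
    and P_nonneg: "\<forall>i\<in>insert k F. 0 \<le> P i"
    and [measurable]: "d \<in> borel_measurable borel" and d_bounds: "\<And>t. 0 \<le> d t \<and> d t \<le> D"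
    and offset: "a = 0 \<or> (\<integral>t. indicator {0..T} t * band (P k) a (d t) \<partial>lborel) = c k"
  shows "energy_feasible F P c T (\<lambda>t. d t - band (P k) a (d t))"
  unfolding energy_feasible_def
proof (intro allI impI)
  fix A assume "A \<subseteq> F"
  define p where "p = sum P (F - A)"
  have "0 \<le> p" "0 \<le> P k"
    unfolding p_def using P_nonneg by (auto intro: sum_nonneg)
  have "k \<notin> A" using \<open>A \<subseteq> F\<close> \<open>k \<notin> F\<close> by auto
  show "(\<integral>t. indicator {0..T} t * max 0 (d t - band (P k) a (d t) - sum P (F - A)) \<partial>lborel) \<le> sum c A"
  proof (cases "a \<le> p")
    case True
    have "sum P (insert k F - A) = p + P k"
      using \<open>k \<notin> A\<close> \<open>finite F\<close> \<open>k \<notin> F\<close> unfolding p_def by (simp add: insert_Diff_if)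
    then have "(\<integral>t. indicator {0..T} t * max 0 (d t - band (P k) a (d t) - sum P (F - A)) \<partial>lborel)
        = (\<integral>t. indicator {0..T} t * max 0 (d t - sum P (insert k F - A)) \<partial>lborel)"
      using excess_after_band_below_offset[OF \<open>0 \<le> P k\<close> True] unfolding p_def by simp
    also have "\<dots> \<le> sum c A"
      using feasible \<open>A \<subseteq> F\<close> unfolding energy_feasible_def by auto
    finally show ?thesis .
  next
    case False
    then have band_energy: "(\<integral>t. indicator {0..T} t * band (P k) a (d t) \<partial>lborel) = c k"
      using offset \<open>0 \<le> p\<close> by auto
    have "insert k F - insert k A = F - A" using \<open>k \<notin> F\<close> by auto
    then have "(\<integral>t. indicator {0..T} t * max 0 (d t - p) \<partial>lborel) \<le> c k + sum c A"
      using feasible \<open>A \<subseteq> F\<close> \<open>k \<notin> A\<close> finite_subset[OF \<open>A \<subseteq> F\<close> \<open>finite F\<close>]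
      unfolding energy_feasible_def p_def by (metis insert_mono subset_insertI sum.insert)
    moreover have "(\<integral>t. indicator {0..T} t * max 0 (d t - band (P k) a (d t) - sum P (F - A)) \<partial>lborel)
        = (\<integral>t. indicator {0..T} t * max 0 (d t - p) - indicator {0..T} t * band (P k) a (d t) \<partial>lborel)"
      using excess_after_band_above_offset[OF \<open>0 \<le> P k\<close>, of p a] False
      unfolding p_def by (simp add: right_diff_distrib)
    moreover have "\<dots> = (\<integral>t. indicator {0..T} t * max 0 (d t - p) \<partial>lborel)
        - (\<integral>t. indicator {0..T} t * band (P k) a (d t) \<partial>lborel)"
    proof (intro Bochner_Integration.integral_diff integrable_indicator_mult_bounded)
      show "\<bar>max 0 (d t - p)\<bar> \<le> D" for t using d_bounds[of t] \<open>0 \<le> p\<close> by auto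
      show "\<bar>band (P k) a (d t)\<bar> \<le> P k" for t
        using band_nonneg[OF \<open>0 \<le> P k\<close>] band_le_height by auto
    qed auto
    ultimately show ?thesis using band_energy by linarith
  qed
qed

definition budget_schedule ::
  "'a set \<Rightarrow> ('a \<Rightarrow> real) \<Rightarrow> ('a \<Rightarrow> real) \<Rightarrow> real \<Rightarrow> (real \<Rightarrow> real) \<Rightarrow> ('a \<Rightarrow> real \<Rightarrow> real) \<Rightarrow> bool"
  where
  "budget_schedule S P c T d r \<longleftrightarrow>
     (\<forall>i\<in>S. r i \<in> borel_measurable borel \<and> (\<forall>t. 0 \<le> r i t \<and> r i t \<le> P i)
            \<and> (\<integral>t. indicator {0..T} t * r i t \<partial>lborel) \<le> c i)
     \<and> (\<forall>t. (\<Sum>i\<in>S. r i t) \<le> d t)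
     \<and> (AE t in lborel. t \<in> {0..T} \<longrightarrow> (\<Sum>i\<in>S. r i t) = d t)"

lemma budget_schedule_empty:
  fixes d :: "real \<Rightarrow> real"
  assumes "energy_feasible {} P c T d"
    and [measurable]: "d \<in> borel_measurable borel" and d_bounds: "\<And>t. 0 \<le> d t \<and> d t \<le> D"
  shows "budget_schedule {} P c T d r"
proof -
  have integrable: "integrable lborel (\<lambda>t. indicator {0..T} t * d t)"
    by (rule integrable_indicator_mult_bounded[where B=D]) (use d_bounds in auto)
  have nonneg: "AE t in lborel. 0 \<le> indicator {0..T} t * d t"
    using d_bounds by auto
  have "(\<integral>t. indicator {0..T} t * d t \<partial>lborel) \<le> 0"
    using assms(1) d_bounds unfolding energy_feasible_def by (simp add: max_def)
  then have "(\<integral>t. indicator {0..T} t * d t \<partial>lborel) = 0"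
    using integral_nonneg_AE[OF nonneg] by linarith
  then have "AE t in lborel. indicator {0..T} t * d t = 0"
    using integral_nonneg_eq_0_iff_AE[OF integrable nonneg] by simp
  then have "AE t in lborel. t \<in> {0..T} \<longrightarrow> 0 = d t"
    by (rule AE_mp) (auto intro!: AE_I2)
  then show ?thesis
    unfolding budget_schedule_def using d_bounds by auto
qed

lemma energy_feasible_budget_nonneg:
  assumes "energy_feasible S P c T d" "k \<in> S"
  shows "0 \<le> c k"
proof -
  have "(\<integral>t. indicator {0..T} t * max 0 (d t - sum P (S - {k})) \<partial>lborel) \<le> c k"
    using assms unfolding energy_feasible_def by auto
  moreover have "0 \<le> (\<integral>t. indicator {0..T} t * max 0 (d t - sum P (S - {k})) \<partial>lborel)"
    by (rule integral_nonneg_AE) auto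
  ultimately show ?thesis by linarith
qed

lemma budget_schedule_insert:
  fixes d :: "real \<Rightarrow> real"
  assumes schedule: "budget_schedule F P c T (\<lambda>t. d t - band (P k) a (d t)) r" and "k \<notin> F"
    and "finite F" "0 \<le> P k" and [measurable]: "d \<in> borel_measurable borel"
    and band_energy: "(\<integral>t. indicator {0..T} t * band (P k) a (d t) \<partial>lborel) \<le> c k"
  shows "budget_schedule (insert k F) P c T d (r(k := (\<lambda>t. band (P k) a (d t))))"
proof -
  define r' where "r' = r(k := (\<lambda>t. band (P k) a (d t)))"
  have sum_r': "(\<Sum>i\<in>insert k F. r' i t) = band (P k) a (d t) + (\<Sum>i\<in>F. r i t)" for t
  proof -
    have "(\<Sum>i\<in>F. r' i t) = (\<Sum>i\<in>F. r i t)"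
      using \<open>k \<notin> F\<close> by (intro sum.cong) (auto simp: r'_def)
    then show ?thesis
      unfolding sum.insert[OF \<open>finite F\<close> \<open>k \<notin> F\<close>] by (simp add: r'_def)
  qed
  have "budget_schedule (insert k F) P c T d r'"
    unfolding budget_schedule_def sum_r'
  proof (intro conjI)
    show "\<forall>i\<in>insert k F. r' i \<in> borel_measurable borel \<and> (\<forall>t. 0 \<le> r' i t \<and> r' i t \<le> P i)
        \<and> (\<integral>t. indicator {0..T} t * r' i t \<partial>lborel) \<le> c i"
      using schedule band_energy band_nonneg[OF \<open>0 \<le> P k\<close>] band_le_height
      unfolding budget_schedule_def r'_def by auto
    show "\<forall>t. band (P k) a (d t) + (\<Sum>i\<in>F. r i t) \<le> d t"
      using schedule unfolding budget_schedule_def by (simp add: le_diff_eq add.commute)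
    show "AE t in lborel. t \<in> {0..T} \<longrightarrow> band (P k) a (d t) + (\<Sum>i\<in>F. r i t) = d t"
      using schedule unfolding budget_schedule_def by (elim conjE AE_mp) (auto intro!: AE_I2)
  qed
  then show ?thesis unfolding r'_def .
qed

lemma budget_schedule_exists:
  fixes S :: "'a set" and P c :: "'a \<Rightarrow> real" and d :: "real \<Rightarrow> real"
  assumes "finite S" "\<forall>i\<in>S. 0 \<le> P i" "0 \<le> T"
    and "d \<in> borel_measurable borel" "\<And>t. 0 \<le> d t \<and> d t \<le> D" "mono_on {0..T} d"
    and "energy_feasible S P c T d"
  shows "\<exists>r. budget_schedule S P c T d r"
  using assms
proof (induction S arbitrary: d rule: finite_induct)
  case empty
  then show ?case using budget_schedule_empty by blast
next
  case (insert k F)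
  note [measurable] = \<open>d \<in> borel_measurable borel\<close>
  have "0 \<le> P k" using insert.prems by simp
  have "0 \<le> c k"
    using energy_feasible_budget_nonneg[OF insert.prems(6)] by simp
  obtain a where "0 \<le> a" and band_energy: "(\<integral>t. indicator {0..T} t * band (P k) a (d t) \<partial>lborel) \<le> c k"
    and offset: "a = 0 \<or> (\<integral>t. indicator {0..T} t * band (P k) a (d t) \<partial>lborel) = c k"
    using band_offset_exists[where d=d and Q="P k" and c="c k", OF _ insert.prems(4)]
      \<open>0 \<le> P k\<close> \<open>0 \<le> T\<close> \<open>0 \<le> c k\<close> by auto
  define d' where "d' = (\<lambda>t. d t - band (P k) a (d t))"
  have "d' \<in> borel_measurable borel" unfolding d'_def by measurable
  moreover have "0 \<le> d' t \<and> d' t \<le> D" for t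
    using band_le[OF \<open>0 \<le> a\<close>] band_nonneg[OF \<open>0 \<le> P k\<close>] insert.prems(4)[of t]
    unfolding d'_def by (smt (verit))
  moreover have "mono_on {0..T} d'"
    using insert.prems(5) band_residual_mono unfolding d'_def mono_on_def by blast
  moreover have "energy_feasible F P c T d'"
    unfolding d'_def
    by (rule energy_feasible_residual[where d=d,
          OF insert.prems(6) insert.hyps insert.prems(1,3,4) offset])
  ultimately obtain r where "budget_schedule F P c T d' r"
    using insert.IH insert.prems(1,2) by blast
  then have "budget_schedule (insert k F) P c T d (r(k := (\<lambda>t. band (P k) a (d t))))"
    using budget_schedule_insert[of F P c T d k a r] insert.hyps \<open>0 \<le> P k\<close> band_energy
      \<open>d \<in> borel_measurable borel\<close> unfolding d'_def by blast
  then show ?case by blast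
qed

lemma mono_on_superlevel_set:
  fixes d :: "real \<Rightarrow> real"
  assumes mono: "mono_on {0..T} d" and "0 \<le> T"
  obtains \<tau> where "0 \<le> \<tau>" "\<tau> \<le> T" "\<And>t. t \<in> {0..T} \<Longrightarrow> t \<noteq> \<tau> \<Longrightarrow> q < d t \<longleftrightarrow> \<tau> < t"
proof (cases "\<exists>s\<in>{0..T}. q < d s")
  case False
  then show ?thesis using that[of T] \<open>0 \<le> T\<close> by auto
next
  case True
  define J where "J = {s \<in> {0..T}. q < d s}"
  have "J \<noteq> {}" and bdd: "bdd_below J"
    using True unfolding J_def by (auto intro: bdd_belowI[of _ 0])
  show ?thesis
  proof (rule that[of "Inf J"])
    show "0 \<le> Inf J" using \<open>J \<noteq> {}\<close> by (intro cInf_greatest) (auto simp: J_def)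
    show "Inf J \<le> T" using True cInf_lower[OF _ bdd] unfolding J_def by force
    fix t assume t: "t \<in> {0..T}" "t \<noteq> Inf J"
    show "q < d t \<longleftrightarrow> Inf J < t"
    proof
      assume "q < d t"
      then show "Inf J < t" using cInf_lower[OF _ bdd, of t] t unfolding J_def by force
    next
      assume "Inf J < t"
      then obtain s where "s \<in> J" "s < t" using cInf_less_iff[OF \<open>J \<noteq> {}\<close> bdd] by auto
      then show "q < d t"
        using mono_onD[OF mono, of s t] t unfolding J_def by force
    qed
  qed
qed

lemma gross_draw_le_sum_plus_power:
  fixes S A :: "'a set" and eta P :: "'a \<Rightarrow> real"
  assumes "finite S" "A \<subseteq> S" "\<forall>i\<in>S. 0 < eta i \<and> eta i \<le> 1 \<and> 0 \<le> P i" "\<forall>i\<in>S. r i t \<le> P i"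
  shows "gross_draw S eta r t \<le> (\<Sum>i\<in>A. r i t) + sum P (S - A)"
proof -
  let ?g = "\<lambda>i. if 0 \<le> r i t then r i t else r i t / eta i"
  have "gross_draw S eta r t = (\<Sum>i\<in>A. ?g i) + (\<Sum>i\<in>S - A. ?g i)"
    unfolding gross_draw_def by (simp add: sum.subset_diff[OF assms(2,1)])
  also have "(\<Sum>i\<in>A. ?g i) \<le> (\<Sum>i\<in>A. r i t)"
  proof (rule sum_mono)
    fix i assume "i \<in> A"
    then have "0 < eta i" "eta i \<le> 1" using assms by auto
    then show "?g i \<le> r i t"
      by (auto simp: divide_le_eq mult_le_cancel_left2 mult.commute)
  qed
  also have "(\<Sum>i\<in>S - A. ?g i) \<le> sum P (S - A)"
  proof (rule sum_mono)
    fix i assume "i \<in> S - A"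
    then have "0 < eta i" "0 \<le> P i" "r i t \<le> P i" using assms by auto
    moreover have "r i t / eta i \<le> 0" if "r i t < 0"
      using that \<open>0 < eta i\<close> by (simp add: divide_nonpos_pos)
    ultimately show "?g i \<le> P i" by auto
  qed
  finally show ?thesis by simp
qed

lemma level_eq_integral:
  "level E0 r i t = E0 i - (\<integral>u. indicator {0..t} u * r i u \<partial>lborel)"
  unfolding level_def set_lebesgue_integral_def by simp

lemma integrable_policy_rate:
  assumes "is_policy S Ebar P P' eta d T E0 r" "i \<in> S" "X \<in> sets lborel" "X \<subseteq> {0..T}"
  shows "integrable lborel (\<lambda>t. indicator X t * r i t)"
proof -
  have "integrable lborel (\<lambda>t. indicator X t * (indicator {0..T} t * r i t))"
  proof (rule integrable_indicator_mult_bounded[where B="\<bar>P i\<bar> + \<bar>P' i\<bar>"])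
    show "(\<lambda>t. indicator {0..T} t * r i t) \<in> borel_measurable borel"
      using assms(1,2) unfolding is_policy_def set_borel_measurable_def by simp
    show "\<bar>indicator {0..T} t * r i t\<bar> \<le> \<bar>P i\<bar> + \<bar>P' i\<bar>" for t
    proof (cases "t \<in> {0..T}")
      case True
      then have "- P' i \<le> r i t" "r i t \<le> P i"
        using assms(1,2) unfolding is_policy_def by auto
      then show ?thesis using True by auto
    qed auto
  qed (use assms(3,4) in auto)
  moreover have "indicator X t * (indicator {0..T} t * r i t) = indicator X t * r i t" for t
    using assms(4) by (auto simp: indicator_def)
  ultimately show ?thesis by simp
qed

lemma tail_delivery_le_depletion:
  assumes policy: "is_policy S Ebar P P' eta d T Ebar r" and "i \<in> S" "0 \<le> \<tau>" "\<tau> \<le> T"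
  shows "(\<integral>t. indicator {\<tau><..T} t * r i t \<partial>lborel) \<le> Ebar i - level Ebar r i T"
proof -
  \<comment> \<open>a full store cannot have gained energy by time \<open>\<tau>\<close>\<close>
  have "level Ebar r i \<tau> \<le> Ebar i"
    using assms unfolding is_policy_def by auto
  then have "0 \<le> (\<integral>t. indicator {0..\<tau>} t * r i t \<partial>lborel)"
    unfolding level_eq_integral by simp
  moreover have "(\<integral>t. indicator {0..T} t * r i t \<partial>lborel)
      = (\<integral>t. indicator {0..\<tau>} t * r i t + indicator {\<tau><..T} t * r i t \<partial>lborel)"
    using assms(3,4) by (intro Bochner_Integration.integral_cong) (auto simp: indicator_def)
  moreover have "\<dots> = (\<integral>t. indicator {0..\<tau>} t * r i t \<partial>lborel) + (\<integral>t. indicator {\<tau><..T} t * r i t \<partial>lborel)"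
    using assms by (intro Bochner_Integration.integral_add integrable_policy_rate[OF policy]) auto
  ultimately show ?thesis
    unfolding level_eq_integral by linarith
qed

lemma excess_demand_le_delivery:
  assumes "finite S" "A \<subseteq> S" and params: "\<forall>i\<in>S. 0 \<le> P i \<and> 0 < eta i \<and> eta i \<le> 1"
    and policy: "is_policy S Ebar P P' eta d T E0 r"
    and serves: "completely_serves S eta r d {0..T}"
    and "0 \<le> \<tau>" and superlevel: "\<And>t. t \<in> {0..T} \<Longrightarrow> t \<noteq> \<tau> \<Longrightarrow> sum P (S - A) < d t \<longleftrightarrow> \<tau> < t"
  shows "AE t in lborel. indicator {0..T} t * max 0 (indicator {0..T} t * d t - sum P (S - A))
      \<le> indicator {\<tau><..T} t * (\<Sum>i\<in>A. r i t)"
  using serves AE_lborel_singleton[of \<tau>] unfolding completely_serves_def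
proof eventually_elim
  case (elim t)
  show ?case
  proof (cases "t \<in> {0..T} \<and> sum P (S - A) < d t")
    case True
    have "gross_draw S eta r t \<le> (\<Sum>i\<in>A. r i t) + sum P (S - A)"
      using policy True params
      by (intro gross_draw_le_sum_plus_power[OF \<open>finite S\<close> \<open>A \<subseteq> S\<close>]) (auto simp: is_policy_def)
    moreover have "\<tau> < t" using True elim superlevel[of t] by auto
    ultimately show ?thesis using True elim by simp
  next
    case False
    then have "t \<notin> {\<tau><..T}" using elim superlevel[of t] \<open>0 \<le> \<tau>\<close> by auto
    moreover have "0 \<le> sum P (S - A)" using params by (auto intro: sum_nonneg)
    ultimately show ?thesis using False by (auto simp: indicator_def)
  qed
qed

lemma energy_feasible_of_policy:
  fixes d :: "real \<Rightarrow> real"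
  assumes "finite S" and params: "\<forall>i\<in>S. 0 \<le> P i \<and> 0 < eta i \<and> eta i \<le> 1" and "0 \<le> T"
    and integrable: "set_integrable lborel {0..T} d"
    and mono: "mono_on {0..T} d" and policy: "is_policy S Ebar P P' eta d T Ebar r"
    and serves: "completely_serves S eta r d {0..T}"
  shows "energy_feasible S P (\<lambda>i. Ebar i - level Ebar r i T) T (\<lambda>t. indicator {0..T} t * d t)"
  unfolding energy_feasible_def
proof (intro allI impI)
  fix A assume "A \<subseteq> S"
  define q where "q = sum P (S - A)"
  obtain \<tau> where \<tau>: "0 \<le> \<tau>" "\<tau> \<le> T"
    and superlevel: "\<And>t. t \<in> {0..T} \<Longrightarrow> t \<noteq> \<tau> \<Longrightarrow> q < d t \<longleftrightarrow> \<tau> < t"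
    using mono_on_superlevel_set[OF mono \<open>0 \<le> T\<close>] by blast
  note r_integrable = integrable_policy_rate[OF policy]
  have "(\<integral>t. indicator {0..T} t * max 0 (indicator {0..T} t * d t - q) \<partial>lborel)
      \<le> (\<integral>t. indicator {\<tau><..T} t * (\<Sum>i\<in>A. r i t) \<partial>lborel)"
  proof (rule integral_mono_AE)
    have dd_integrable: "integrable lborel (\<lambda>t. indicator {0..T} t * d t)"
      using integrable unfolding set_integrable_def by simp
    then have [measurable]: "(\<lambda>t. indicator {0..T} t * d t) \<in> borel_measurable borel"
      by (simp add: borel_measurable_integrable)
    have "0 \<le> q" unfolding q_def using params by (auto intro: sum_nonneg)
    show "integrable lborel (\<lambda>t. indicator {0..T} t * max 0 (indicator {0..T} t * d t - q))"
    proof (rule Bochner_Integration.integrable_bound[OF dd_integrable])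
      show "AE t in lborel. norm (indicator {0..T} t * max 0 (indicator {0..T} t * d t - q))
          \<le> norm (indicator {0..T} t * d t)"
        using \<open>0 \<le> q\<close> by (intro AE_I2) (auto simp: indicator_def)
    qed measurable
    show "integrable lborel (\<lambda>t. indicator {\<tau><..T} t * (\<Sum>i\<in>A. r i t))"
      unfolding sum_distrib_left
      using \<open>A \<subseteq> S\<close> \<tau> by (intro Bochner_Integration.integrable_sum r_integrable) auto
    show "AE t in lborel. indicator {0..T} t * max 0 (indicator {0..T} t * d t - q)
        \<le> indicator {\<tau><..T} t * (\<Sum>i\<in>A. r i t)"
      unfolding q_def
      by (rule excess_demand_le_delivery[OF \<open>finite S\<close> \<open>A \<subseteq> S\<close> params policy serves \<tau>(1)
            superlevel[unfolded q_def]])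
  qed
  also have "\<dots> = (\<Sum>i\<in>A. \<integral>t. indicator {\<tau><..T} t * r i t \<partial>lborel)"
    unfolding sum_distrib_left
    using \<open>A \<subseteq> S\<close> \<tau> by (intro Bochner_Integration.integral_sum r_integrable) auto
  also have "\<dots> \<le> (\<Sum>i\<in>A. Ebar i - level Ebar r i T)"
    using tail_delivery_le_depletion[OF policy] \<open>A \<subseteq> S\<close> \<tau> by (intro sum_mono) auto
  finally show "(\<integral>t. indicator {0..T} t * max 0 (indicator {0..T} t * d t - sum P (S - A)) \<partial>lborel)
      \<le> (\<Sum>i\<in>A. Ebar i - level Ebar r i T)"
    unfolding q_def .
qed

lemma policy_of_budget_schedule:
  fixes d :: "real \<Rightarrow> real"
  assumes schedule: "budget_schedule S P c T (\<lambda>t. indicator {0..T} t * d t) r"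
    and budget: "\<forall>i\<in>S. c i \<le> Ebar i" and P'_nonneg: "\<forall>i\<in>S. 0 \<le> P' i"
  shows "is_policy S Ebar P P' eta d T Ebar r"
    and "completely_serves S eta r d {0..T}"
    and "\<forall>i\<in>S. Ebar i - c i \<le> level Ebar r i T"
proof -
  have rate: "r i \<in> borel_measurable borel" "0 \<le> r i t" "r i t \<le> P i"
    "(\<integral>t. indicator {0..T} t * r i t \<partial>lborel) \<le> c i" if "i \<in> S" for i t
    using schedule that unfolding budget_schedule_def by auto
  have gross_draw_eq: "gross_draw S eta r t = (\<Sum>i\<in>S. r i t)" for t
    unfolding gross_draw_def using rate(2) by (intro sum.cong) auto
  have drawn_le_budget: "(\<integral>u. indicator {0..t} u * r i u \<partial>lborel) \<le> c i"
    if i: "i \<in> S" and "t \<le> T" for i t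
  proof -
    have integrable: "integrable lborel (\<lambda>u. indicator X u * r i u)"
      if "X \<subseteq> {0..T}" "X \<in> sets lborel" for X
      using rate[OF i] that by (intro integrable_indicator_mult_bounded[where B="P i"]) auto
    have "(\<integral>u. indicator {0..t} u * r i u \<partial>lborel) \<le> (\<integral>u. indicator {0..T} u * r i u \<partial>lborel)"
      using rate(2)[OF i] \<open>t \<le> T\<close>
      by (intro Bochner_Integration.integral_mono integrable) (auto simp: indicator_def)
    then show ?thesis using rate(4)[OF i] by linarith
  qed
  show "is_policy S Ebar P P' eta d T Ebar r"
    unfolding is_policy_def
  proof (intro conjI ballI)
    fix i assume i: "i \<in> S"
    note [measurable] = rate(1)[OF i]
    show "set_borel_measurable lborel {0..T} (r i)"
      unfolding set_borel_measurable_def by measurable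
    fix t assume "t \<in> {0..T}"
    have "c i \<le> Ebar i" using budget i by blast
    then show "0 \<le> level Ebar r i t"
      using drawn_le_budget[OF i, of t] \<open>t \<in> {0..T}\<close> unfolding level_eq_integral by simp
    have "0 \<le> (\<integral>u. indicator {0..t} u * r i u \<partial>lborel)"
      using rate(2)[OF i] by (intro integral_nonneg_AE) auto
    then show "level Ebar r i t \<le> Ebar i"
      unfolding level_eq_integral by simp
    show "- P' i \<le> r i t"
      using rate(2)[OF i, of t] P'_nonneg i by fastforce
    show "r i t \<le> P i"
      using rate(3)[OF i] .
  next
    fix t assume "t \<in> {0..T}"
    have "(\<Sum>i\<in>S. r i t) \<le> indicator {0..T} t * d t"
      using schedule unfolding budget_schedule_def by blast
    then show "0 \<le> gross_draw S eta r t" "gross_draw S eta r t \<le> d t"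
      unfolding gross_draw_eq using rate(2) \<open>t \<in> {0..T}\<close> by (auto intro: sum_nonneg)
  qed
  have "AE t in lborel. t \<in> {0..T} \<longrightarrow> (\<Sum>i\<in>S. r i t) = indicator {0..T} t * d t"
    using schedule unfolding budget_schedule_def by blast
  then show "completely_serves S eta r d {0..T}"
    unfolding completely_serves_def gross_draw_eq by (rule AE_mp) (auto intro!: AE_I2)
  show "\<forall>i\<in>S. Ebar i - c i \<le> level Ebar r i T"
    using rate(4) unfolding level_eq_integral by fastforce
qed

theorem theorem3:
  fixes S :: "'a set" and Ebar P P' eta :: "'a \<Rightarrow> real"
    and d :: "real \<Rightarrow> real" and T :: real and r :: "'a \<Rightarrow> real \<Rightarrow> real"
  assumes "finite S"
    and "\<forall>i\<in>S. 0 < Ebar i \<and> 0 < P i \<and> 0 \<le> P' i \<and> 0 < eta i \<and> eta i \<le> 1"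
    and "0 < T"
    and "\<forall>t\<in>{0..T}. 0 \<le> d t"
    and "set_integrable lborel {0..T} d"
    and "mono_on {0..T} d"
    and "is_policy S Ebar P P' eta d T Ebar r"
    and "completely_serves S eta r d {0..T}"
  shows "\<exists>r'. (\<forall>i\<in>S. \<forall>t\<in>{0..T}. 0 \<le> r' i t)
           \<and> is_policy S Ebar P P' eta d T Ebar r'
           \<and> completely_serves S eta r' d {0..T}
           \<and> (\<forall>i\<in>S. level Ebar r' i T \<ge> level Ebar r i T)"
proof -
  define c where "c i = Ebar i - level Ebar r i T" for i
  define dd where "dd t = indicator {0..T} t * d t" for t
  have "dd \<in> borel_measurable borel"
    using assms(5) unfolding dd_def set_integrable_def by (simp add: borel_measurable_integrable)
  moreover have "0 \<le> dd t \<and> dd t \<le> d T" for t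
    using assms(3,4) mono_onD[OF assms(6), of t T] unfolding dd_def by (auto simp: indicator_def)
  moreover have "mono_on {0..T} dd"
    using assms(6) unfolding dd_def mono_on_def by auto
  moreover have "energy_feasible S P c T dd"
    unfolding c_def dd_def using assms by (intro energy_feasible_of_policy) auto
  ultimately obtain r' where schedule: "budget_schedule S P c T dd r'"
    using budget_schedule_exists[OF assms(1)] assms(2,3) by (metis less_imp_le)
  have budget: "\<forall>i\<in>S. c i \<le> Ebar i"
    using assms(3,7) unfolding c_def is_policy_def by auto
  have "\<forall>i\<in>S. 0 \<le> P' i"
    using assms(2) by auto
  note new_policy = policy_of_budget_schedule[OF schedule[unfolded dd_def] budget this]
  have "\<forall>i\<in>S. \<forall>t\<in>{0..T}. 0 \<le> r' i t"
    using schedule unfolding budget_schedule_def by auto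
  then show ?thesis
    using new_policy unfolding c_def by fastforce
qed

end
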